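(* Let $\omega\in\mathcal{F}^1(\mathbb{P}^n,e)$. Then $\mathscr{C}(\omega)=J\subseteq I\subseteq K$.
   Context: $S=\mathbb{C}[x_0,\ldots,x_n]$, $R=\sum x_i\partial/\partial x_i$. $\mathcal{F}^1(\mathbb{P}^n,e)$ ($e\ge2$) is the set of (classes up to scalar of) $\omega=\sum A_i dx_i$, $A_i\in S$ homogeneous of degree $e-1$, not all zero, with $i_R\omega=0$, $\omega\wedge d\omega=0$ and zero locus in $\mathbb{P}^n$ of codimension $\ge2$. $\mathscr{C}(\eta)$ is the ideal generated by the coefficients of a form $\eta$. $J=\{i_X\omega: X\text{ polynomial vector field}\}$; $I=\{h\in S: h\,d\omega=\omega\wedge\eta\text{ for some polynomial 1-form }\eta\}$; $K=(J\cdot\Omega^2_S:d\omega)=\{a\in S: a\,d\omega\in J\cdot\Omega^2_S\}$. *)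

theory Defs
  imports Complex_Main "HOL-Library.Poly_Mapping"
begin

text \<open>Polynomial ring S = C[x_i : i in 'n] with 'n a finite type of n+1 variables
  (so P^n has n = CARD('n) - 1). Monomials are exponent vectors 'n =>0 nat.\<close>

type_synonym 'n mpoly = "('n \<Rightarrow>\<^sub>0 nat) \<Rightarrow>\<^sub>0 complex"

definition var :: "'n \<Rightarrow> 'n mpoly" where
  "var i = Poly_Mapping.single (Poly_Mapping.single i 1) 1"

definition mdeg :: "('n::finite \<Rightarrow>\<^sub>0 nat) \<Rightarrow> nat" where
  "mdeg m = (\<Sum>i\<in>UNIV. Poly_Mapping.lookup m i)"

definition homogeneous :: "nat \<Rightarrow> 'n::finite mpoly \<Rightarrow> bool" where
  "homogeneous d p \<longleftrightarrow> (\<forall>m\<in>Poly_Mapping.keys p. mdeg m = d)"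

definition pderiv_var :: "'n \<Rightarrow> 'n mpoly \<Rightarrow> 'n mpoly" where
  "pderiv_var i p = (\<Sum>m\<in>Poly_Mapping.keys p.
      Poly_Mapping.single (m - Poly_Mapping.single i 1) (of_nat (Poly_Mapping.lookup m i) * Poly_Mapping.lookup p m))"

text \<open>Polynomial 1-forms: sum_i A i dx_i, represented by A :: 'n => S.
  Polynomial 2-forms: sum_{i<j} B i j dx_i /\ dx_j, represented by the alternating
  coefficient function B (B i j = - B j i).\<close>

definition dform :: "('n \<Rightarrow> 'n mpoly) \<Rightarrow> 'n \<Rightarrow> 'n \<Rightarrow> 'n mpoly" where
  "dform A i j = pderiv_var i (A j) - pderiv_var j (A i)"

definition wedge11 :: "('n \<Rightarrow> 'n mpoly) \<Rightarrow> ('n \<Rightarrow> 'n mpoly) \<Rightarrow> 'n \<Rightarrow> 'n \<Rightarrow> 'n mpoly" where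
  "wedge11 A E i j = A i * E j - A j * E i"

text \<open>Coefficient of dx_i /\ dx_j /\ dx_k in A /\ B (A a 1-form, B a 2-form).\<close>
definition wedge12 :: "('n \<Rightarrow> 'n mpoly) \<Rightarrow> ('n \<Rightarrow> 'n \<Rightarrow> 'n mpoly) \<Rightarrow> 'n \<Rightarrow> 'n \<Rightarrow> 'n \<Rightarrow> 'n mpoly" where
  "wedge12 A B i j k = A i * B j k - A j * B i k + A k * B i j"

definition contract :: "('n::finite \<Rightarrow> 'n mpoly) \<Rightarrow> ('n \<Rightarrow> 'n mpoly) \<Rightarrow> 'n mpoly" where
  "contract X A = (\<Sum>i\<in>UNIV. X i * A i)"

definition is_ideal :: "'a::comm_ring_1 set \<Rightarrow> bool" where
  "is_ideal I \<longleftrightarrow> 0 \<in> I \<and> (\<forall>a\<in>I. \<forall>b\<in>I. a + b \<in> I) \<and> (\<forall>r. \<forall>a\<in>I. r * a \<in> I)"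

definition ideal_gen :: "'a::comm_ring_1 set \<Rightarrow> 'a set" where
  "ideal_gen G = \<Inter>{I. is_ideal I \<and> G \<subseteq> I}"

definition prime_ideal :: "'a::comm_ring_1 set \<Rightarrow> bool" where
  "prime_ideal P \<longleftrightarrow> is_ideal P \<and> P \<noteq> UNIV \<and> (\<forall>a b. a * b \<in> P \<longrightarrow> a \<in> P \<or> b \<in> P)"

definition height_ge2 :: "'a::comm_ring_1 set \<Rightarrow> bool" where
  "height_ge2 I \<longleftrightarrow> (\<forall>P. prime_ideal P \<and> I \<subseteq> P \<longrightarrow>
      (\<exists>Q0 Q1. prime_ideal Q0 \<and> prime_ideal Q1 \<and> Q0 \<subset> Q1 \<and> Q1 \<subset> P))"

text \<open>Codimension of the projective zero locus of a homogeneous ideal equals its height.\<close>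
definition codim_zero_locus_ge2 :: "'n::finite mpoly set \<Rightarrow> bool" where
  "codim_zero_locus_ge2 G \<longleftrightarrow> height_ge2 (ideal_gen G)"

definition foliation :: "nat \<Rightarrow> ('n::finite \<Rightarrow> 'n mpoly) \<Rightarrow> bool" where
  "foliation e A \<longleftrightarrow> 2 \<le> e
     \<and> (\<forall>i. homogeneous (e - 1) (A i))
     \<and> (\<exists>i. A i \<noteq> 0)
     \<and> contract var A = 0
     \<and> (\<forall>i j k. wedge12 A (dform A) i j k = 0)
     \<and> codim_zero_locus_ge2 (range A)"

definition coeff_ideal :: "('n \<Rightarrow> 'n mpoly) \<Rightarrow> 'n mpoly set" where
  "coeff_ideal A = ideal_gen (range A)"

definition J_ideal :: "('n::finite \<Rightarrow> 'n mpoly) \<Rightarrow> 'n mpoly set" where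
  "J_ideal A = {contract X A | X. True}"

definition I_ideal :: "('n::finite \<Rightarrow> 'n mpoly) \<Rightarrow> 'n mpoly set" where
  "I_ideal A = {h. \<exists>E. \<forall>i j. h * dform A i j = wedge11 A E i j}"

text \<open>(J Omega^2_S : d omega): J Omega^2_S consists of the 2-forms all of whose
  coefficients lie in J.\<close>
definition K_ideal :: "('n::finite \<Rightarrow> 'n mpoly) \<Rightarrow> 'n mpoly set" where
  "K_ideal A = {a. \<forall>i j. a * dform A i j \<in> J_ideal A}"

end

theory Submission
  imports Defs
begin

text \<open>The coefficient \<open>A i\<close> is the contraction of \<open>\<omega>\<close> with \<open>\<partial>/\<partial>x\<^sub>i\<close>, so the \<open>A i\<close>
  lie in \<open>J\<close> and generate it. Contracting the integrability condition \<open>\<omega> \<and> d\<omega> = 0\<close>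
  with a vector field \<open>X\<close> gives \<open>(i\<^sub>X \<omega>) d\<omega> = \<omega> \<and> i\<^sub>X d\<omega>\<close>, hence \<open>J \<subseteq> I\<close>; and every
  coefficient of a 2-form \<open>\<omega> \<and> \<eta>\<close> is a combination of the \<open>A i\<close>, hence \<open>I \<subseteq> K\<close>.\<close>

lemma is_ideal_sum:
  assumes "is_ideal I" "finite F" "\<And>x. x \<in> F \<Longrightarrow> f x \<in> I"
  shows "sum f F \<in> I"
  using assms(2,3)
proof (induction F rule: finite_induct)
  case empty
  then show ?case using assms(1) by (simp add: is_ideal_def)
next
  case (insert x F)
  then show ?case using assms(1) by (simp add: is_ideal_def)
qed

lemma is_ideal_J_ideal: "is_ideal (J_ideal A)"
  unfolding is_ideal_def J_ideal_def
proof (intro conjI ballI allI)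
  show "0 \<in> {contract X A |X. True}"
    by (intro CollectI exI[of _ "\<lambda>_. 0"]) (simp add: contract_def)
next
  fix a b assume "a \<in> {contract X A |X. True}" "b \<in> {contract X A |X. True}"
  then obtain X Y where "a = contract X A" "b = contract Y A" by blast
  then show "a + b \<in> {contract X A |X. True}"
    by (intro CollectI exI[of _ "\<lambda>i. X i + Y i"])
       (simp add: contract_def sum.distrib distrib_right)
next
  fix r a assume "a \<in> {contract X A |X. True}"
  then obtain X where "a = contract X A" by blast
  then show "r * a \<in> {contract X A |X. True}"
    by (intro CollectI exI[of _ "\<lambda>i. r * X i"])
       (simp add: contract_def sum_distrib_left mult.assoc)
qed

lemma coeff_in_J_ideal: "A i \<in> J_ideal A"
proof -
  have "contract (\<lambda>k. if k = i then 1 else 0) A = A i"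
    unfolding contract_def by (simp add: if_distrib[of "\<lambda>c. c * _"] cong: if_cong)
  then show ?thesis unfolding J_ideal_def by (metis (mono_tags, lifting) CollectI)
qed

lemma J_ideal_subset:
  assumes "is_ideal I" "range A \<subseteq> I"
  shows "J_ideal A \<subseteq> I"
proof
  fix h assume "h \<in> J_ideal A"
  then obtain X where "h = (\<Sum>i\<in>UNIV. X i * A i)"
    unfolding J_ideal_def contract_def by blast
  moreover have "X i * A i \<in> I" for i
    using assms by (auto simp: is_ideal_def image_subset_iff)
  ultimately show "h \<in> I" by (simp add: is_ideal_sum[OF assms(1)])
qed

lemma coeff_ideal_eq_J_ideal: "coeff_ideal A = J_ideal A"
proof
  show "coeff_ideal A \<subseteq> J_ideal A"
    unfolding coeff_ideal_def ideal_gen_def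
    using is_ideal_J_ideal coeff_in_J_ideal by blast
  show "J_ideal A \<subseteq> coeff_ideal A"
    unfolding coeff_ideal_def ideal_gen_def using J_ideal_subset by blast
qed

lemma contract_mult_eq_wedge11:
  assumes "\<And>i j k. wedge12 A B i j k = 0"
  shows "contract X A * B i j = wedge11 A (\<lambda>j. \<Sum>k\<in>UNIV. X k * B k j) i j"
proof -
  have "A k * B i j = A i * B k j - A j * B k i" for k
    using assms[of k i j] by (simp add: wedge12_def algebra_simps)
  then have "contract X A * B i j = (\<Sum>k\<in>UNIV. X k * (A i * B k j - A j * B k i))"
    unfolding contract_def sum_distrib_right by (simp add: mult.assoc)
  then show ?thesis
    by (simp add: wedge11_def sum_distrib_left sum_subtractf algebra_simps)
qed

lemma J_ideal_subset_I_ideal: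
  assumes "\<And>i j k. wedge12 A (dform A) i j k = 0"
  shows "J_ideal A \<subseteq> I_ideal A"
  unfolding J_ideal_def I_ideal_def
  using contract_mult_eq_wedge11[OF assms] by blast

lemma wedge11_in_J_ideal: "wedge11 A E i j \<in> J_ideal A"
proof -
  have "E j * A i \<in> J_ideal A" "(- E i) * A j \<in> J_ideal A"
    using is_ideal_J_ideal coeff_in_J_ideal unfolding is_ideal_def by blast+
  then have "E j * A i + (- E i) * A j \<in> J_ideal A"
    using is_ideal_J_ideal unfolding is_ideal_def by blast
  then show ?thesis by (simp add: wedge11_def algebra_simps)
qed

lemma I_ideal_subset_K_ideal: "I_ideal A \<subseteq> K_ideal A"
  unfolding I_ideal_def K_ideal_def using wedge11_in_J_ideal by fastforce

theorem proposition4p7: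
  fixes A :: "'n::finite \<Rightarrow> 'n mpoly" and e :: nat
  assumes "foliation e A"
  shows "coeff_ideal A = J_ideal A \<and> J_ideal A \<subseteq> I_ideal A \<and> I_ideal A \<subseteq> K_ideal A"
proof -
  have "\<And>i j k. wedge12 A (dform A) i j k = 0"
    using assms by (simp add: foliation_def)
  then show ?thesis
    using coeff_ideal_eq_J_ideal J_ideal_subset_I_ideal I_ideal_subset_K_ideal by blast
qed

end
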